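(* For every $n\geq1$ and all $N\times N$ real symmetric positive semidefinite matrices $A_{1},\ldots,A_{n},X$, \[ \Delta_{A_{1}}\Delta_{A_{2}}\cdots\Delta_{A_{n}}\det(X)=\sum_{k=0}^{n}(-1)^{n-k}\sum_{1\leq i_{1}<\cdots<i_{k}\leq n}\det(A_{i_{1}}+\cdots+A_{i_{k}}+X)\geq0 \] (the $k=0$ term being $(-1)^n\det X$). In other words, the restriction of $\det$ to the cone of positive semidefinite $N\times N$ real symmetric matrices has positive differences of every order $n\geq0$.
   Context: $(\Delta_{H}f)(X)=f(X+H)-f(X)$. A function $f$ on a convex cone has positive differences of order $n\geq1$ if $\Delta_{H_1}\cdots\Delta_{H_n}f(X)\geq0$ for all $X,H_1,\ldots,H_n$ in the cone, and of order $0$ if $f\geq0$. *)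

theory Defs
  imports "HOL-Analysis.Analysis"
begin

definition Delta :: "'a::plus \<Rightarrow> ('a \<Rightarrow> real) \<Rightarrow> 'a \<Rightarrow> real" where
  "Delta H f X = f (X + H) - f X"

definition iter_Delta :: "(nat \<Rightarrow> 'a::plus) \<Rightarrow> nat \<Rightarrow> ('a \<Rightarrow> real) \<Rightarrow> 'a \<Rightarrow> real" where
  "iter_Delta A n f = foldr (\<lambda>i g. Delta (A i) g) [1..<n+1] f"

definition psd :: "real^'n^'n \<Rightarrow> bool" where
  "psd M \<longleftrightarrow> transpose M = M \<and> (\<forall>x. 0 \<le> x \<bullet> (M *v x))"

end

theory Submission
  imports Defs
begin

(* Every positive semidefinite matrix is a sum of rank-one matrices u u^T.  Expanding
   det (sum_j u_j u_j^T) by multilinearity in the rows gives one term for every map f from the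
   row indices to the vectors, and the terms of f o p, summed over all permutations p, add up
   to det (u_(f 1), ..., u_(f N))^2 >= 0.  Label every vector by the matrix A_i (or X) it comes
   from.  Then det (sum_(i in S) A_i + X) collects the terms of those f whose labels lie in S,
   so by Moebius inversion the alternating sum over S, which is the iterated difference,
   collects exactly the terms of those f whose labels cover {1..n}.  This family is closed
   under permutations, hence its sum is nonnegative. *)

lemma iter_Delta_Suc:
  "iter_Delta A (Suc n) f = iter_Delta A n (Delta (A (Suc n)) f)"
  unfolding iter_Delta_def by (simp add: upt_Suc_append)

lemma sum_Pow_insert:
  assumes "finite A" "a \<notin> A"
  shows "(\<Sum>S\<in>Pow (insert a A). g S) = (\<Sum>S\<in>Pow A. g S + g (insert a S))"
proof -
  have "inj_on (insert a) (Pow A)"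
    using assms(2) by (intro inj_onI) (metis PowD Diff_insert_absorb subsetD)
  then show ?thesis
    unfolding Pow_insert using assms
    by (subst sum.union_disjoint) (auto simp: sum.reindex sum.distrib)
qed

lemma iter_Delta_eq_sum_Pow:
  fixes A :: "nat \<Rightarrow> 'a::comm_monoid_add"
  shows "iter_Delta A n f X = (\<Sum>S\<in>Pow {1..n}. (-1) ^ (n - card S) * f (sum A S + X))"
proof (induction n arbitrary: f)
  case 0
  then show ?case by (simp add: iter_Delta_def)
next
  case (Suc n)
  have "(-1) ^ (n - card S) * (f (sum A S + X + A (Suc n)) - f (sum A S + X)) =
      (-1) ^ (Suc n - card S) * f (sum A S + X) +
      (-1) ^ (Suc n - card (insert (Suc n) S)) * f (sum A (insert (Suc n) S) + X)"
    if "S \<in> Pow {1..n}" for S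
  proof -
    have "finite S" "Suc n \<notin> S" "card S \<le> n"
      using that finite_subset card_mono[of "{1..n}" S] by auto
    then show ?thesis by (simp add: Suc_diff_le add_ac right_diff_distrib)
  qed
  then have "iter_Delta A (Suc n) f X =
      (\<Sum>S\<in>Pow {1..n}. (-1) ^ (Suc n - card S) * f (sum A S + X) +
         (-1) ^ (Suc n - card (insert (Suc n) S)) * f (sum A (insert (Suc n) S) + X))"
    by (simp add: iter_Delta_Suc Suc.IH Delta_def)
  also have "\<dots> = (\<Sum>S\<in>Pow {1..Suc n}. (-1) ^ (Suc n - card S) * f (sum A S + X))"
    using atLeastAtMostSuc_conv[of 1 n] by (simp add: sum_Pow_insert)
  finally show ?case .
qed

lemma sum_Pow_group_card:
  fixes g :: "'a set \<Rightarrow> 'b::semiring_0"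
  assumes "finite U"
  shows "(\<Sum>S\<in>Pow U. h (card S) * g S) =
    (\<Sum>k=0..card U. h k * (\<Sum>S\<in>{S. S \<subseteq> U \<and> card S = k}. g S))"
proof -
  have "(\<Sum>S\<in>Pow U. h (card S) * g S) =
      (\<Sum>k=0..card U. \<Sum>S\<in>{S\<in>Pow U. card S = k}. h (card S) * g S)"
    using assms by (intro sum.group[symmetric]) (auto simp: card_mono)
  then show ?thesis
    by (simp add: sum_distrib_left)
qed

definition outer :: "real^'n \<Rightarrow> real^'n^'n" where
  "outer u = (\<chi> i j. u$i * u$j)"

lemma outer_nth [simp]: "outer u $ i $ j = u$i * u$j"
  by (simp add: outer_def)

lemma outer_mult_vec: "outer u *v x = (u \<bullet> x) *s u"
  by (simp add: vec_eq_iff matrix_vector_mult_def inner_vec_def sum_distrib_left mult_ac)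

lemma inner_outer_mult_vec: "x \<bullet> (outer u *v x) = (u \<bullet> x)\<^sup>2"
  by (simp add: outer_mult_vec scalar_mult_eq_scaleR inner_commute[of x u] power2_eq_square)

lemma inner_axis_mult_vec_axis: "axis i 1 \<bullet> (M *v axis j 1) = (M::real^'n^'n) $ i $ j"
  by (simp add: matrix_vector_mult_basis column_def inner_axis inner_commute[of "axis i 1"])

lemma psd_symmetric: "psd M \<Longrightarrow> M $ i $ j = M $ j $ i"
  unfolding psd_def by (metis transpose_def vec_lambda_beta)

lemma psd_diag_nonneg: "psd M \<Longrightarrow> 0 \<le> M $ i $ i"
  unfolding psd_def by (metis inner_axis_mult_vec_axis)

lemma quadratic_form_add_scaled:
  fixes M :: "real^'n^'n"
  assumes "transpose M = M"
  shows "(a + t *s b) \<bullet> (M *v (a + t *s b)) =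
    a \<bullet> (M *v a) + 2 * t * (a \<bullet> (M *v b)) + t\<^sup>2 * (b \<bullet> (M *v b))"
proof -
  have "b \<bullet> (M *v a) = a \<bullet> (M *v b)"
    by (metis assms dot_lmul_matrix inner_commute vector_transpose_matrix)
  then show ?thesis
    by (simp add: matrix_vector_right_distrib matrix_vector_mult_scaleR inner_add_left
        inner_add_right scalar_mult_eq_scaleR power2_eq_square algebra_simps)
qed

lemma psd_inner_eq_0:
  assumes "psd M" "b \<bullet> (M *v b) = 0"
  shows "a \<bullet> (M *v b) = 0"
proof (rule ccontr)
  assume ne: "a \<bullet> (M *v b) \<noteq> 0"
  define t where "t = - (a \<bullet> (M *v a) + 1) / (2 * (a \<bullet> (M *v b)))"
  have "0 \<le> (a + t *s b) \<bullet> (M *v (a + t *s b))"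
    using assms(1) unfolding psd_def by blast
  also have "\<dots> = -1"
    using assms ne quadratic_form_add_scaled[of M a t b] by (simp add: psd_def t_def field_simps)
  finally show False by simp
qed

lemma psd_zero_diag: "psd M \<Longrightarrow> M $ k $ k = 0 \<Longrightarrow> M $ i $ k = 0"
  using psd_inner_eq_0[of M "axis k 1" "axis i 1"] by (simp add: inner_axis_mult_vec_axis)

lemma diff_outer_column_nth:
  fixes X :: "real^'n^'n"
  assumes "0 < X $ j $ j"
  shows "(X - outer ((1 / sqrt (X $ j $ j)) *s column j X)) $ a $ b =
    X $ a $ b - X $ a $ j * X $ b $ j / X $ j $ j"
  using assms by (simp add: column_def real_sqrt_mult[symmetric] field_simps)

lemma psd_diff_outer_column:
  fixes X :: "real^'n^'n"
  assumes "psd X" "0 < X $ j $ j"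
  shows "psd (X - outer ((1 / sqrt (X $ j $ j)) *s column j X))" (is "psd ?X'")
  unfolding psd_def
proof (intro conjI allI)
  show "transpose ?X' = ?X'"
    using assms
    by (simp add: vec_eq_iff transpose_def diff_outer_column_nth psd_symmetric mult.commute)
next
  fix x :: "real^'n"
  define d c where "d = X $ j $ j" and "c = column j X"
  have Xc: "X *v axis j 1 = c" and cj: "axis j 1 \<bullet> c = d"
    by (simp_all add: c_def d_def matrix_vector_mult_basis inner_axis_mult_vec_axis[symmetric])
  define t where "t = - (x \<bullet> c) / d"
  have "0 \<le> (x + t *s axis j 1) \<bullet> (X *v (x + t *s axis j 1))"
    using assms(1) unfolding psd_def by blast
  also have "\<dots> = x \<bullet> (X *v x) + 2 * t * (x \<bullet> c) + t\<^sup>2 * d"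
    using assms(1) quadratic_form_add_scaled[of X x t "axis j 1"] by (simp add: psd_def Xc cj)
  also have "\<dots> = x \<bullet> (X *v x) - ((1 / sqrt d) * (x \<bullet> c))\<^sup>2"
    using assms(2) by (simp add: t_def d_def power_mult_distrib power_divide field_simps power2_eq_square)
  also have "\<dots> = x \<bullet> (?X' *v x)"
    by (simp add: matrix_vector_mult_diff_rdistrib inner_diff_right inner_outer_mult_vec
        scalar_mult_eq_scaleR inner_commute[of "column j X" x] c_def d_def)
  finally show "0 \<le> x \<bullet> (?X' *v x)" .
qed

(* One step of a Cholesky factorisation: it clears row and column j without creating new
   nonzero diagonal entries. *)
lemma diag_support_diff_outer_column:
  fixes X :: "real^'n^'n"
  assumes "psd X" "0 < X $ j $ j"
  shows "{k. (X - outer ((1 / sqrt (X $ j $ j)) *s column j X)) $ k $ k \<noteq> 0}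
    \<subseteq> {k. X $ k $ k \<noteq> 0} - {j}"
proof
  fix k
  assume "k \<in> {k. (X - outer ((1 / sqrt (X $ j $ j)) *s column j X)) $ k $ k \<noteq> 0}"
  then have ne: "X $ k $ k - X $ k $ j * X $ k $ j / X $ j $ j \<noteq> 0"
    unfolding diff_outer_column_nth[OF assms(2)] by simp
  have "X $ k $ k \<noteq> 0"
    using ne psd_zero_diag[OF assms(1), of k j] psd_symmetric[OF assms(1), of k j] by auto
  moreover have "k \<noteq> j"
    using ne assms(2) by auto
  ultimately show "k \<in> {k. X $ k $ k \<noteq> 0} - {j}" by simp
qed

lemma psd_eq_sum_outer:
  fixes X :: "real^'n^'n"
  assumes "psd X"
  shows "\<exists>(m::nat) v. X = (\<Sum>k<m. outer (v k))"
  using assms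
proof (induction "card {k. X $ k $ k \<noteq> 0}" arbitrary: X rule: less_induct)
  case less
  show ?case
  proof (cases "\<exists>j. X $ j $ j \<noteq> 0")
    case False
    then have "X = (\<Sum>k<0::nat. outer (v k))" for v
      using psd_zero_diag[OF less.prems] by (simp add: vec_eq_iff lessThan_0)
    then show ?thesis by blast
  next
    case True
    then obtain j where j: "X $ j $ j \<noteq> 0" ..
    then have d: "0 < X $ j $ j"
      using psd_diag_nonneg[OF less.prems, of j] by simp
    define u where "u = (1 / sqrt (X $ j $ j)) *s column j X"
    have "{k. (X - outer u) $ k $ k \<noteq> 0} \<subseteq> {k. X $ k $ k \<noteq> 0} - {j}"
      unfolding u_def by (rule diag_support_diff_outer_column[OF less.prems d])
    then have "card {k. (X - outer u) $ k $ k \<noteq> 0} \<le> card ({k. X $ k $ k \<noteq> 0} - {j})"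
      by (intro card_mono) auto
    also have "\<dots> < card {k. X $ k $ k \<noteq> 0}"
      using j by (intro card_Diff1_less) auto
    finally obtain m :: nat and v where "X - outer u = (\<Sum>k<m. outer (v k))"
      using less.hyps psd_diff_outer_column[OF less.prems d] unfolding u_def by blast
    moreover have "(\<Sum>k<Suc m. outer ((v(m := u)) k)) = (\<Sum>k<m. outer (v k)) + outer u"
      by (simp add: sum.lessThan_Suc)
    ultimately have "X = (\<Sum>k<Suc m. outer ((v(m := u)) k))"
      by (metis diff_add_cancel)
    then show ?thesis by blast
  qed
qed

lemma det_rows_sum:
  fixes a :: "'n \<Rightarrow> 'b \<Rightarrow> 'a::comm_ring_1^'n"
  assumes "finite J"
  shows "det (\<chi> i. \<Sum>j\<in>J. a i j) = (\<Sum>f\<in>{f. \<forall>i. f i \<in> J}. det (\<chi> i. a i (f i)))"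
proof -
  have PiE: "PiE UNIV (\<lambda>_. J) = {f. \<forall>i. f i \<in> J}"
    by (auto simp: PiE_def Pi_def extensional_def)
  have "det (\<chi> i. \<Sum>j\<in>J. a i j) =
      (\<Sum>p\<in>{p. p permutes UNIV}. of_int (sign p) * (\<Prod>i\<in>UNIV. \<Sum>j\<in>J. a i j $ p i))"
    by (simp add: det_def sum_component)
  also have "\<dots> = (\<Sum>p\<in>{p. p permutes UNIV}. \<Sum>f\<in>{f. \<forall>i. f i \<in> J}.
      of_int (sign p) * (\<Prod>i\<in>UNIV. a i (f i) $ p i))"
    by (simp add: prod_sum_PiE assms PiE sum_distrib_left)
  also have "\<dots> = (\<Sum>f\<in>{f. \<forall>i. f i \<in> J}. det (\<chi> i. a i (f i)))"
    by (subst sum.swap) (simp add: det_def)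
  finally show ?thesis .
qed

definition det_outer_term :: "('b \<Rightarrow> real^'n) \<Rightarrow> ('n \<Rightarrow> 'b) \<Rightarrow> real" where
  "det_outer_term u f = (\<Prod>i\<in>UNIV. u (f i) $ i) * det (\<chi> i. u (f i))"

lemma det_sum_outer:
  fixes u :: "'b \<Rightarrow> real^'n"
  assumes "finite J"
  shows "det (\<Sum>j\<in>J. outer (u j)) = (\<Sum>f\<in>{f. \<forall>i. f i \<in> J}. det_outer_term u f)"
proof -
  have "(\<Sum>j\<in>J. outer (u j)) = (\<chi> i. \<Sum>j\<in>J. (u j $ i) *s u j)"
    by (simp add: vec_eq_iff sum_component)
  then show ?thesis
    by (simp add: det_rows_sum[OF assms] det_rows_mul det_outer_term_def)
qed

lemma sum_permutes_det_outer_term: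
  fixes u :: "'b \<Rightarrow> real^'n"
  shows "(\<Sum>p\<in>{p. p permutes UNIV}. det_outer_term u (f \<circ> p)) = (det (\<chi> i. u (f i)))\<^sup>2"
proof -
  define G where "G = ((\<chi> i. u (f i)) :: real^'n^'n)"
  have "det_outer_term u (f \<circ> p) = det G * (of_int (sign p) * (\<Prod>i\<in>UNIV. transpose G $ i $ p i))"
    if "p permutes UNIV" for p
  proof -
    have "det (\<chi> i. u ((f \<circ> p) i)) = of_int (sign p) * det G"
      using det_permute_rows[OF that, of G] by (simp add: G_def)
    then show ?thesis
      by (simp add: det_outer_term_def transpose_def G_def)
  qed
  then have "(\<Sum>p\<in>{p. p permutes UNIV}. det_outer_term u (f \<circ> p)) = det G * det (transpose G)"
    by (simp add: det_def sum_distrib_left)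
  then show ?thesis
    by (simp add: G_def det_transpose power2_eq_square)
qed

lemma sum_det_outer_term_nonneg:
  fixes u :: "'b \<Rightarrow> real^'n"
  assumes "finite F"
    and closed: "\<And>f p. f \<in> F \<Longrightarrow> p permutes UNIV \<Longrightarrow> f \<circ> p \<in> F"
  shows "0 \<le> (\<Sum>f\<in>F. det_outer_term u f)"
proof -
  let ?P = "{p. p permutes (UNIV::'n set)}"
  have reindex: "(\<Sum>f\<in>F. det_outer_term u (f \<circ> p)) = (\<Sum>f\<in>F. det_outer_term u f)"
    if p: "p permutes UNIV" for p
  proof (rule sum.reindex_bij_witness[where i="\<lambda>f. f \<circ> inv p" and j="\<lambda>f. f \<circ> p"])
    fix f
    assume "f \<in> F"
    then show "f \<circ> p \<in> F" "f \<circ> inv p \<in> F"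
      using closed p permutes_inv by blast+
    show "f \<circ> p \<circ> inv p = f" "f \<circ> inv p \<circ> p = f"
      using p by (simp_all add: fun_eq_iff permutes_inverses)
  qed simp
  have "real (card ?P) * (\<Sum>f\<in>F. det_outer_term u f) = (\<Sum>p\<in>?P. \<Sum>f\<in>F. det_outer_term u (f \<circ> p))"
    using reindex by simp
  also have "\<dots> = (\<Sum>f\<in>F. (det (\<chi> i. u (f i)))\<^sup>2)"
    by (subst sum.swap) (simp add: sum_permutes_det_outer_term)
  also have "\<dots> \<ge> 0"
    by (simp add: sum_nonneg)
  finally have "0 \<le> real (card ?P) * (\<Sum>f\<in>F. det_outer_term u f)" .
  moreover have "0 < card ?P"
    using card_permutations[of "UNIV::'n set" "CARD('n)"] by simp
  ultimately show ?thesis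
    by (metis of_nat_0_less_iff zero_le_mult_iff not_le)
qed

lemma alternating_sum_det_sum_outer_nonneg:
  fixes u :: "'b \<Rightarrow> real^'n" and lab :: "'b \<Rightarrow> 'c set"
  assumes "finite J" "finite U"
  shows "0 \<le> (\<Sum>S\<in>Pow U. (-1) ^ (card U - card S) * det (\<Sum>j\<in>{j\<in>J. lab j \<subseteq> S}. outer (u j)))"
proof -
  define F where "F = {f :: 'n \<Rightarrow> 'b. \<forall>i. f i \<in> J}"
  define L where "L f = (\<Union>i. lab (f i))" for f :: "'n \<Rightarrow> 'b"
  define h where "h T = (\<Sum>f\<in>{f\<in>F. L f = T}. det_outer_term u f)" for T
  have "finite F"
    using finite_set_of_finite_funs[of "UNIV :: 'n set" J undefined] assms(1) by (simp add: F_def)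
  have "det (\<Sum>j\<in>{j\<in>J. lab j \<subseteq> S}. outer (u j)) = sum h (Pow S)" if "finite S" for S
  proof -
    have "{f. \<forall>i. f i \<in> {j\<in>J. lab j \<subseteq> S}} = {f\<in>F. L f \<subseteq> S}"
      by (auto simp: F_def L_def)
    then have "det (\<Sum>j\<in>{j\<in>J. lab j \<subseteq> S}. outer (u j)) = (\<Sum>f\<in>{f\<in>F. L f \<subseteq> S}. det_outer_term u f)"
      using det_sum_outer[of "{j\<in>J. lab j \<subseteq> S}" u] assms(1) by simp
    also have "\<dots> = (\<Sum>T\<in>Pow S. \<Sum>f\<in>{f\<in>{f\<in>F. L f \<subseteq> S}. L f = T}. det_outer_term u f)"
      using \<open>finite F\<close> that by (intro sum.group[symmetric]) auto
    also have "\<dots> = sum h (Pow S)"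
      unfolding h_def by (intro sum.cong refl arg_cong2[where f=sum]) auto
    finally show ?thesis .
  qed
  then have "h U = (\<Sum>S\<in>Pow U. (-1) ^ (card U - card S) * det (\<Sum>j\<in>{j\<in>J. lab j \<subseteq> S}. outer (u j)))"
    by (rule inclusion_exclusion_mobius[OF _ assms(2)])
  moreover have "0 \<le> h U"
    unfolding h_def
  proof (rule sum_det_outer_term_nonneg)
    show "finite {f\<in>F. L f = U}"
      using \<open>finite F\<close> by simp
    fix f and p :: "'n \<Rightarrow> 'n"
    assume "f \<in> {f\<in>F. L f = U}" "p permutes UNIV"
    moreover from \<open>p permutes UNIV\<close> have "L (f \<circ> p) = L f"
      unfolding L_def by (metis image_comp image_image permutes_surj)
    ultimately show "f \<circ> p \<in> {f\<in>F. L f = U}"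
      by (simp add: F_def)
  qed
  ultimately show ?thesis by simp
qed

lemma psd_alternating_sum_det_nonneg:
  fixes A :: "'c \<Rightarrow> real^'n^'n" and X :: "real^'n^'n"
  assumes "finite U" "\<And>i. i \<in> U \<Longrightarrow> psd (A i)" "psd X"
  shows "0 \<le> (\<Sum>S\<in>Pow U. (-1) ^ (card U - card S) * det (sum A S + X))"
proof -
  define B where "B = case_option X A"
  define I where "I = insert None (Some ` U)"
  have decomp: "\<forall>i\<in>I. \<exists>(m::nat) v. B i = (\<Sum>k<m. outer (v k))"
    using assms by (auto simp: I_def B_def intro: psd_eq_sum_outer)
  obtain m :: "'c option \<Rightarrow> nat" where m: "\<forall>i\<in>I. \<exists>v. B i = (\<Sum>k<m i. outer (v k))"
    using bchoice[OF decomp] by blast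
  obtain v where mv: "\<forall>i\<in>I. B i = (\<Sum>k<m i. outer (v i k))"
    using bchoice[OF m] by blast
  define J where "J = Sigma I (\<lambda>i. {..<m i})"
  \<comment> \<open>The vectors of X carry the empty label, those of A i the label {i}.\<close>
  have split: "sum A S + X = (\<Sum>j\<in>{j\<in>J. set_option (fst j) \<subseteq> S}. outer (case_prod v j))"
    if "S \<subseteq> U" for S
  proof -
    have "finite S"
      using assms(1) that finite_subset by blast
    have "sum A S + X = sum B (insert None (Some ` S))"
      using \<open>finite S\<close> by (simp add: B_def sum.reindex add.commute)
    also have "\<dots> = (\<Sum>i\<in>insert None (Some ` S). \<Sum>k<m i. outer (v i k))"
      using mv that by (intro sum.cong) (auto simp: I_def)
    also have "\<dots> = (\<Sum>j\<in>Sigma (insert None (Some ` S)) (\<lambda>i. {..<m i}). outer (case_prod v j))"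
      using \<open>finite S\<close> by (subst sum.Sigma) (auto simp: split_def)
    also have "Sigma (insert None (Some ` S)) (\<lambda>i. {..<m i}) = {j\<in>J. set_option (fst j) \<subseteq> S}"
      using that by (force simp: J_def I_def)
    finally show ?thesis .
  qed
  have "finite J"
    using assms(1) by (simp add: J_def I_def)
  then have "0 \<le> (\<Sum>S\<in>Pow U. (-1) ^ (card U - card S) *
      det (\<Sum>j\<in>{j\<in>J. set_option (fst j) \<subseteq> S}. outer (case_prod v j)))"
    using alternating_sum_det_sum_outer_nonneg[where lab="set_option \<circ> fst"] assms(1) by simp
  also have "\<dots> = (\<Sum>S\<in>Pow U. (-1) ^ (card U - card S) * det (sum A S + X))"
    using split by simp
  finally show ?thesis .
qed

theorem theorem5p6:
  fixes A :: "nat \<Rightarrow> real^'N^'N" and X :: "real^'N^'N" and n :: nat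
  assumes "n \<ge> 1"
    and "\<And>i. i \<in> {1..n} \<Longrightarrow> psd (A i)"
    and "psd X"
  shows "iter_Delta A n det X =
           (\<Sum>k=0..n. (-1) ^ (n - k) *
              (\<Sum>S\<in>{S. S \<subseteq> {1..n} \<and> card S = k}. det ((\<Sum>i\<in>S. A i) + X)))
       \<and> iter_Delta A n det X \<ge> 0"
proof
  have expansion: "iter_Delta A n det X =
      (\<Sum>S\<in>Pow {1..n}. (-1) ^ (card {1..n} - card S) * det (sum A S + X))"
    by (simp add: iter_Delta_eq_sum_Pow)
  then show "iter_Delta A n det X =
      (\<Sum>k=0..n. (-1) ^ (n - k) * (\<Sum>S\<in>{S. S \<subseteq> {1..n} \<and> card S = k}. det ((\<Sum>i\<in>S. A i) + X)))"
    using sum_Pow_group_card[of "{1..n}" "\<lambda>k. (-1) ^ (n - k)" "\<lambda>S. det (sum A S + X)"] by simp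
  show "iter_Delta A n det X \<ge> 0"
    unfolding expansion using assms(2,3) by (rule psd_alternating_sum_det_nonneg[OF finite_atLeastAtMost])
qed

end
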